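(* Let $\mu\in\mathcal C$ be nilpotent, let $\mathfrak z$ be the centre of $(\mathfrak g,\mu)$, $\mathfrak z^\perp$ its orthogonal complement, $\mathrm{Pr}_{\mathfrak z},\mathrm{Pr}_{\mathfrak z^\perp}$ the orthogonal projections, $\mu_0:=\mathrm{Pr}_{\mathfrak z}\circ\mu$ and $\mu_1:=\mathrm{Pr}_{\mathfrak z^\perp}\circ\mu$. Let $D\in\mathfrak{gl}(\mathfrak g,J)$. Then $D\in\mathrm{Der}(\mu)$ if and only if $D(\mathfrak z)\subset\mathfrak z$ and the endomorphisms $D_{00}:=\mathrm{Pr}_{\mathfrak z}D\,\mathrm{Pr}_{\mathfrak z}$, $D_{01}:=\mathrm{Pr}_{\mathfrak z}D\,\mathrm{Pr}_{\mathfrak z^\perp}$, $D_{11}:=\mathrm{Pr}_{\mathfrak z^\perp}D\,\mathrm{Pr}_{\mathfrak z^\perp}$ of $\mathfrak g$ satisfy $$D_{00}\mu_0(v,w)+D_{01}\mu_1(v,w)-\mu_0(D_{11}v,w)-\mu_0(v,D_{11}w)=0\quad\text{for all }v,w\in\mathfrak g,$$ and $D_{11}\in\mathrm{Der}(\mu_1)$.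
   Context: $\mathfrak g$ is a real vector space of dimension $2n$ with complex structure $J$ and inner product $\langle\cdot,\cdot\rangle$ for which $J$ is orthogonal. A bracket is a skew-symmetric bilinear map $\mathfrak g\times\mathfrak g\to\mathfrak g$; $\mathcal C$ is the set of brackets satisfying the Jacobi identity and $\nu(J\cdot,\cdot)=J\nu(\cdot,\cdot)$. $\mathfrak{gl}(\mathfrak g,J)=\{A\in\mathrm{End}(\mathfrak g):AJ=JA\}$. For a bracket $\nu$, $\mathrm{Der}(\nu)=\{D\in\mathfrak{gl}(\mathfrak g,J): D\nu(\cdot,\cdot)=\nu(D\cdot,\cdot)+\nu(\cdot,D\cdot)\}$. *)

theory Defs
  imports "HOL-Analysis.Analysis"
begin

text \<open>The real vector space g with inner product is modelled by a finite-dimensional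
real inner product space (type class euclidean_space).\<close>

definition complex_structure :: "('a::euclidean_space \<Rightarrow> 'a) \<Rightarrow> bool" where
  "complex_structure J \<longleftrightarrow> linear J \<and> (\<forall>x. J (J x) = - x)"

definition orthogonal_map :: "('a::euclidean_space \<Rightarrow> 'a) \<Rightarrow> bool" where
  "orthogonal_map J \<longleftrightarrow> (\<forall>x y. inner (J x) (J y) = inner x y)"

definition is_bracket :: "('a::euclidean_space \<Rightarrow> 'a \<Rightarrow> 'a) \<Rightarrow> bool" where
  "is_bracket \<nu> \<longleftrightarrow> bilinear \<nu> \<and> (\<forall>x y. \<nu> x y = - \<nu> y x)"

definition jacobi :: "('a::euclidean_space \<Rightarrow> 'a \<Rightarrow> 'a) \<Rightarrow> bool" where
  "jacobi \<nu> \<longleftrightarrow> (\<forall>x y z. \<nu> x (\<nu> y z) + \<nu> y (\<nu> z x) + \<nu> z (\<nu> x y) = 0)"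

definition bracket_C :: "('a::euclidean_space \<Rightarrow> 'a) \<Rightarrow> ('a \<Rightarrow> 'a \<Rightarrow> 'a) set" where
  "bracket_C J = {\<nu>. is_bracket \<nu> \<and> jacobi \<nu> \<and> (\<forall>x y. \<nu> (J x) y = J (\<nu> x y))}"

definition gl_J :: "('a::euclidean_space \<Rightarrow> 'a) \<Rightarrow> ('a \<Rightarrow> 'a) set" where
  "gl_J J = {A. linear A \<and> (\<forall>x. A (J x) = J (A x))}"

definition Der :: "('a::euclidean_space \<Rightarrow> 'a) \<Rightarrow> ('a \<Rightarrow> 'a \<Rightarrow> 'a) \<Rightarrow> ('a \<Rightarrow> 'a) set" where
  "Der J \<nu> = {D \<in> gl_J J. \<forall>x y. D (\<nu> x y) = \<nu> (D x) y + \<nu> x (D y)}"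

fun lower_central :: "('a::euclidean_space \<Rightarrow> 'a \<Rightarrow> 'a) \<Rightarrow> nat \<Rightarrow> 'a set" where
  "lower_central \<nu> 0 = UNIV"
| "lower_central \<nu> (Suc k) = span {\<nu> x y | x y. y \<in> lower_central \<nu> k}"

definition nilpotent_bracket :: "('a::euclidean_space \<Rightarrow> 'a \<Rightarrow> 'a) \<Rightarrow> bool" where
  "nilpotent_bracket \<nu> \<longleftrightarrow> (\<exists>k. lower_central \<nu> k = {0})"

definition centre :: "('a::euclidean_space \<Rightarrow> 'a \<Rightarrow> 'a) \<Rightarrow> 'a set" where
  "centre \<nu> = {z. \<forall>x. \<nu> z x = 0}"

definition orth_proj :: "'a::euclidean_space set \<Rightarrow> 'a \<Rightarrow> 'a" where
  "orth_proj W v = (THE w. w \<in> W \<and> v - w \<in> orthogonal_comp W)"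

end

(* Every derivation preserves the centre z, and J preserves z and, being orthogonal with
   J^2 = -1, also its orthogonal complement; hence both projections commute with J.
   Once D z \<subseteq> z one has P1 D P1 = P1 D, and since mu only sees the z-perp components of
   its arguments, mu (D v) w = mu (D11 v) w.  The derivation identity for D therefore splits
   into its z-component, which is the displayed equation, and its z-perp component, which
   says that D11 is a derivation of mu1. *)

theory Submission
  imports Defs
begin

lemma orth_proj_unique:
  fixes W :: "'a::euclidean_space set"
  assumes W: "subspace W" and "a \<in> W" and "v - a \<in> W\<^sup>\<bottom>"
  shows "orth_proj W v = a"
  unfolding orth_proj_def
proof (rule the_equality)
  fix b assume b: "b \<in> W \<and> v - b \<in> W\<^sup>\<bottom>"
  have "a - b = (v - b) - (v - a)" by simp
  also have "\<dots> \<in> W\<^sup>\<bottom>"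
    using b \<open>v - a \<in> W\<^sup>\<bottom>\<close> by (blast intro: subspace_diff[OF subspace_orthogonal_comp])
  finally have "a - b \<in> W \<inter> W\<^sup>\<bottom>" using W \<open>a \<in> W\<close> b by (simp add: subspace_diff)
  then show "b = a" using orthogonal_Int_0[OF W] by simp
qed (use assms in blast)

lemma orth_proj_mem:
  fixes W :: "'a::euclidean_space set"
  assumes W: "subspace W"
  shows "orth_proj W v \<in> W" and "v - orth_proj W v \<in> W\<^sup>\<bottom>"
proof -
  obtain a b where "v = a + b" "a \<in> W" "b \<in> W\<^sup>\<bottom>"
    using subspace_sum_orthogonal_comp[OF W] set_plus_elim by (metis UNIV_I)
  then have "orth_proj W v = a" by (simp add: orth_proj_unique[OF W])
  then show "orth_proj W v \<in> W" and "v - orth_proj W v \<in> W\<^sup>\<bottom>"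
    using \<open>v = a + b\<close> \<open>a \<in> W\<close> \<open>b \<in> W\<^sup>\<bottom>\<close> by simp_all
qed

lemma orth_proj_id:
  fixes W :: "'a::euclidean_space set"
  assumes "subspace W" and "a \<in> W"
  shows "orth_proj W a = a"
  using assms by (simp add: orth_proj_unique subspace_0 subspace_orthogonal_comp)

lemma orth_proj_idem:
  fixes W :: "'a::euclidean_space set"
  assumes "subspace W"
  shows "orth_proj W (orth_proj W v) = orth_proj W v"
  using assms by (simp add: orth_proj_id orth_proj_mem)

lemma orth_proj_orthogonal_comp:
  fixes W :: "'a::euclidean_space set"
  assumes W: "subspace W"
  shows "orth_proj (W\<^sup>\<bottom>) v = v - orth_proj W v"
proof (rule orth_proj_unique[OF subspace_orthogonal_comp])
  show "v - orth_proj W v \<in> W\<^sup>\<bottom>" by (rule orth_proj_mem(2)[OF W])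
  show "v - (v - orth_proj W v) \<in> W\<^sup>\<bottom>\<^sup>\<bottom>"
    using orth_proj_mem(1)[OF W] orthogonal_comp_subset by auto
qed

lemma linear_orth_proj:
  fixes W :: "'a::euclidean_space set"
  assumes W: "subspace W"
  shows "linear (orth_proj W)"
proof (rule linearI)
  note mem = orth_proj_mem[OF W]
  fix x y :: 'a and c :: real
  have "x + y - (orth_proj W x + orth_proj W y) = (x - orth_proj W x) + (y - orth_proj W y)"
    by simp
  also have "\<dots> \<in> W\<^sup>\<bottom>" by (rule subspace_add[OF subspace_orthogonal_comp mem(2) mem(2)])
  finally show "orth_proj W (x + y) = orth_proj W x + orth_proj W y"
    by (intro orth_proj_unique[OF W] subspace_add[OF W mem(1) mem(1)])
  have "c *\<^sub>R x - c *\<^sub>R orth_proj W x = c *\<^sub>R (x - orth_proj W x)"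
    by (simp add: scale_right_diff_distrib)
  also have "\<dots> \<in> W\<^sup>\<bottom>" by (rule subspace_scale[OF subspace_orthogonal_comp mem(2)])
  finally show "orth_proj W (c *\<^sub>R x) = c *\<^sub>R orth_proj W x"
    by (intro orth_proj_unique[OF W] subspace_scale[OF W mem(1)])
qed

lemma eq_0_iff_orth_proj:
  fixes W :: "'a::euclidean_space set"
  assumes "subspace W"
  shows "v = 0 \<longleftrightarrow> orth_proj W v = 0 \<and> orth_proj (W\<^sup>\<bottom>) v = 0"
  using assms by (auto simp: orth_proj_orthogonal_comp linear_0 linear_orth_proj)

lemma orth_proj_commute:
  fixes W :: "'a::euclidean_space set"
  assumes W: "subspace W" and f: "linear f" and "f ` W \<subseteq> W" and "f ` (W\<^sup>\<bottom>) \<subseteq> W\<^sup>\<bottom>"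
  shows "orth_proj W (f v) = f (orth_proj W v)"
proof (rule orth_proj_unique[OF W])
  show "f (orth_proj W v) \<in> W" using assms orth_proj_mem(1)[OF W] by blast
  have "f v - f (orth_proj W v) = f (v - orth_proj W v)" by (simp add: linear_diff[OF f])
  also have "\<dots> \<in> W\<^sup>\<bottom>" using assms orth_proj_mem(2)[OF W] by blast
  finally show "f v - f (orth_proj W v) \<in> W\<^sup>\<bottom>" .
qed

lemma orth_proj_block_sum:
  fixes W :: "'a::euclidean_space set"
  assumes W: "subspace W" and D: "linear D"
  shows "orth_proj W (D (orth_proj W v)) + orth_proj W (D (orth_proj (W\<^sup>\<bottom>) v)) = orth_proj W (D v)"
  by (simp add: orth_proj_orthogonal_comp[OF W] linear_diff[OF D]
      linear_diff[OF linear_orth_proj[OF W]])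

lemma orth_proj_compression:
  fixes W :: "'a::euclidean_space set"
  assumes W: "subspace W" and D: "linear D" and DW: "D ` W \<subseteq> W"
  shows "orth_proj (W\<^sup>\<bottom>) (D (orth_proj (W\<^sup>\<bottom>) v)) = orth_proj (W\<^sup>\<bottom>) (D v)"
proof -
  have "D (orth_proj W v) \<in> W" using DW orth_proj_mem(1)[OF W] by blast
  then have "orth_proj (W\<^sup>\<bottom>) (D (orth_proj W v)) = 0"
    by (simp add: orth_proj_orthogonal_comp orth_proj_id W)
  then show ?thesis
    by (simp add: orth_proj_orthogonal_comp[OF W, of v] linear_diff[OF D]
        linear_diff[OF linear_orth_proj[OF subspace_orthogonal_comp]])
qed

lemma orthogonal_comp_invariant:
  assumes J: "complex_structure J" and "orthogonal_map J" and "J ` W \<subseteq> W"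
  shows "J ` (W\<^sup>\<bottom>) \<subseteq> W\<^sup>\<bottom>"
proof (rule image_subsetI)
  fix x assume x: "x \<in> W\<^sup>\<bottom>"
  have "y \<bullet> J x = 0" if "y \<in> W" for y
  proof -
    have "y = - J (J y)" using J by (simp add: complex_structure_def)
    then have "y \<bullet> J x = - (J y \<bullet> x)"
      using \<open>orthogonal_map J\<close> by (metis inner_minus_left orthogonal_map_def)
    also have "J y \<bullet> x = 0"
      using x that \<open>J ` W \<subseteq> W\<close> by (auto simp: orthogonal_comp_def orthogonal_def)
    finally show ?thesis by simp
  qed
  then show "J x \<in> W\<^sup>\<bottom>" by (simp add: orthogonal_comp_def orthogonal_def)
qed

lemma compression_in_gl_J:
  fixes W :: "'a::euclidean_space set"
  assumes J: "complex_structure J" "orthogonal_map J" and W: "subspace W" "J ` W \<subseteq> W"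
    and A: "A \<in> gl_J J"
  shows "orth_proj (W\<^sup>\<bottom>) \<circ> A \<circ> orth_proj (W\<^sup>\<bottom>) \<in> gl_J J"
proof -
  have linJ: "linear J" using J by (simp add: complex_structure_def)
  have "orth_proj W (J v) = J (orth_proj W v)" for v
    using orth_proj_commute[OF W(1) linJ W(2) orthogonal_comp_invariant[OF J W(2)]] .
  then have "orth_proj (W\<^sup>\<bottom>) (J v) = J (orth_proj (W\<^sup>\<bottom>) v)" for v
    by (simp add: orth_proj_orthogonal_comp W linear_diff[OF linJ])
  moreover have "linear (orth_proj (W\<^sup>\<bottom>))" by (simp add: linear_orth_proj subspace_orthogonal_comp)
  ultimately show ?thesis using A by (auto simp: gl_J_def intro: linear_compose)
qed

lemma subspace_centre:
  assumes "is_bracket \<mu>"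
  shows "subspace (centre \<mu>)"
proof -
  have "bilinear \<mu>" using assms unfolding is_bracket_def by blast
  then show ?thesis
    by (simp add: subspace_def centre_def bilinear_ladd bilinear_lmul bilinear_lzero)
qed

lemma centre_J_invariant:
  assumes "\<mu> \<in> bracket_C J" and "complex_structure J"
  shows "J ` centre \<mu> \<subseteq> centre \<mu>"
  using assms by (auto simp: bracket_C_def centre_def complex_structure_def linear_0)

lemma bracket_orth_proj_centre:
  assumes br: "is_bracket \<mu>"
  shows "\<mu> (orth_proj ((centre \<mu>)\<^sup>\<bottom>) x) y = \<mu> x y" and "\<mu> x (orth_proj ((centre \<mu>)\<^sup>\<bottom>) y) = \<mu> x y"
proof -
  have bil: "bilinear \<mu>" and skew: "\<And>x y. \<mu> x y = - \<mu> y x" using br unfolding is_bracket_def by blast+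
  have "\<mu> (orth_proj (centre \<mu>) x) y = 0" for x y
    using orth_proj_mem(1)[OF subspace_centre[OF br]] by (simp add: centre_def)
  then show left: "\<mu> (orth_proj ((centre \<mu>)\<^sup>\<bottom>) x) y = \<mu> x y" for x y
    by (simp add: orth_proj_orthogonal_comp subspace_centre[OF br] bilinear_lsub[OF bil])
  have "\<mu> x (orth_proj ((centre \<mu>)\<^sup>\<bottom>) y) = - \<mu> (orth_proj ((centre \<mu>)\<^sup>\<bottom>) y) x"
    by (rule skew)
  also have "\<dots> = \<mu> x y" using skew[of y x] by (simp add: left)
  finally show "\<mu> x (orth_proj ((centre \<mu>)\<^sup>\<bottom>) y) = \<mu> x y" .
qed

lemma Der_maps_centre:
  assumes "D \<in> Der J \<mu>"
  shows "D ` centre \<mu> \<subseteq> centre \<mu>"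
proof (rule image_subsetI)
  fix z assume z: "z \<in> centre \<mu>"
  have "\<mu> (D z) x = 0" for x
  proof -
    have "D (\<mu> z x) = \<mu> (D z) x + \<mu> z (D x)" and "linear D"
      using assms by (simp_all add: Der_def gl_J_def)
    then show ?thesis using z by (simp add: centre_def linear_0)
  qed
  then show "D z \<in> centre \<mu>" by (simp add: centre_def)
qed

lemma derivation_identity_iff_blocks:
  fixes \<mu> :: "'a::euclidean_space \<Rightarrow> 'a \<Rightarrow> 'a"
  assumes br: "is_bracket \<mu>" and D: "linear D" and Dz: "D ` centre \<mu> \<subseteq> centre \<mu>"
  defines "P0 \<equiv> orth_proj (centre \<mu>)" and "P1 \<equiv> orth_proj ((centre \<mu>)\<^sup>\<bottom>)"
  defines "D11 \<equiv> P1 \<circ> D \<circ> P1"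
  shows "D (\<mu> v w) = \<mu> (D v) w + \<mu> v (D w) \<longleftrightarrow>
           (P0 \<circ> D \<circ> P0) (P0 (\<mu> v w)) + (P0 \<circ> D \<circ> P1) (P1 (\<mu> v w))
             - P0 (\<mu> (D11 v) w) - P0 (\<mu> v (D11 w)) = 0 \<and>
           D11 (P1 (\<mu> v w)) = P1 (\<mu> (D11 v) w) + P1 (\<mu> v (D11 w))"
proof -
  let ?m = "\<mu> v w" and ?r = "\<mu> (D v) w + \<mu> v (D w)"
  have z: "subspace (centre \<mu>)" by (rule subspace_centre[OF br])
  have linP0: "linear P0" and linP1: "linear P1"
    unfolding P0_def P1_def by (simp_all add: linear_orth_proj z subspace_orthogonal_comp)
  have idem: "P0 (P0 u) = P0 u" "P1 (P1 u) = P1 u" for u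
    unfolding P0_def P1_def by (simp_all add: orth_proj_idem z subspace_orthogonal_comp)
  have D11_eq: "D11 u = P1 (D u)" for u
    unfolding D11_def P1_def using orth_proj_compression[OF z D Dz] by simp
  have r_eq: "?r = \<mu> (D11 v) w + \<mu> v (D11 w)"
    unfolding D11_eq P1_def by (simp add: bracket_orth_proj_centre[OF br])
  have zero_iff: "D ?m = ?r \<longleftrightarrow> P0 (D ?m - ?r) = 0 \<and> P1 (D ?m - ?r) = 0"
    unfolding P0_def P1_def using eq_0_iff_orth_proj[OF z, of "D ?m - ?r"] by simp
  have "P0 (D ?m) = (P0 \<circ> D \<circ> P0) (P0 ?m) + (P0 \<circ> D \<circ> P1) (P1 ?m)"
    using orth_proj_block_sum[OF z D, of ?m] idem by (simp add: P0_def P1_def)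
  then have P0_part: "P0 (D ?m - ?r) = (P0 \<circ> D \<circ> P0) (P0 ?m) + (P0 \<circ> D \<circ> P1) (P1 ?m)
      - P0 (\<mu> (D11 v) w) - P0 (\<mu> v (D11 w))"
    unfolding r_eq by (simp only: linear_diff[OF linP0] linear_add[OF linP0] diff_diff_eq)
  have "P1 (D ?m) = D11 (P1 ?m)"
    using D11_eq idem(2) orth_proj_compression[OF z D Dz, of ?m] by (simp add: P1_def)
  then have P1_part: "P1 (D ?m - ?r) = D11 (P1 ?m) - (P1 (\<mu> (D11 v) w) + P1 (\<mu> v (D11 w)))"
    unfolding r_eq by (simp only: linear_diff[OF linP1] linear_add[OF linP1])
  show ?thesis
    unfolding zero_iff P0_part P1_part by (simp only: diff_diff_eq right_minus_eq)
qed

theorem proposition3p2: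
  fixes J :: "'a::euclidean_space \<Rightarrow> 'a"
    and \<mu> :: "'a \<Rightarrow> 'a \<Rightarrow> 'a"
    and D :: "'a \<Rightarrow> 'a"
  assumes J: "complex_structure J" and Jorth: "orthogonal_map J"
    and \<mu>C: "\<mu> \<in> bracket_C J" and nil: "nilpotent_bracket \<mu>"
    and D: "D \<in> gl_J J"
  defines "\<zz> \<equiv> centre \<mu>"
  defines "P0 \<equiv> orth_proj \<zz>"
  defines "P1 \<equiv> orth_proj (orthogonal_comp \<zz>)"
  defines "\<mu>0 \<equiv> (\<lambda>v w. P0 (\<mu> v w))"
  defines "\<mu>1 \<equiv> (\<lambda>v w. P1 (\<mu> v w))"
  defines "D00 \<equiv> P0 \<circ> D \<circ> P0"
  defines "D01 \<equiv> P0 \<circ> D \<circ> P1"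
  defines "D11 \<equiv> P1 \<circ> D \<circ> P1"
  shows "D \<in> Der J \<mu> \<longleftrightarrow>
           (D ` \<zz> \<subseteq> \<zz> \<and>
            (\<forall>v w. D00 (\<mu>0 v w) + D01 (\<mu>1 v w) - \<mu>0 (D11 v) w - \<mu>0 v (D11 w) = 0) \<and>
            D11 \<in> Der J \<mu>1)"
proof -
  have br: "is_bracket \<mu>" using \<mu>C unfolding bracket_C_def by blast
  have z: "subspace \<zz>" "J ` \<zz> \<subseteq> \<zz>"
    unfolding \<zz>_def by (rule subspace_centre[OF br], rule centre_J_invariant[OF \<mu>C J])
  have linD: "linear D" using D by (simp add: gl_J_def)
  have D11_gl: "D11 \<in> gl_J J"
    unfolding D11_def P1_def by (rule compression_in_gl_J[OF J Jorth z D])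
  have Dz: "D ` \<zz> \<subseteq> \<zz>" if "D \<in> Der J \<mu>"
    unfolding \<zz>_def using that by (rule Der_maps_centre)
  have blocks: "D (\<mu> v w) = \<mu> (D v) w + \<mu> v (D w) \<longleftrightarrow>
      D00 (\<mu>0 v w) + D01 (\<mu>1 v w) - \<mu>0 (D11 v) w - \<mu>0 v (D11 w) = 0 \<and>
      D11 (\<mu>1 v w) = \<mu>1 (D11 v) w + \<mu>1 v (D11 w)" if "D ` \<zz> \<subseteq> \<zz>" for v w
    using derivation_identity_iff_blocks[OF br linD that[unfolded \<zz>_def]]
    unfolding \<zz>_def P0_def P1_def \<mu>0_def \<mu>1_def D00_def D01_def D11_def .
  have "D \<in> Der J \<mu> \<longleftrightarrow> D ` \<zz> \<subseteq> \<zz> \<and> (\<forall>v w. D (\<mu> v w) = \<mu> (D v) w + \<mu> v (D w))"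
    using Dz D unfolding Der_def by blast
  also have "\<dots> \<longleftrightarrow> D ` \<zz> \<subseteq> \<zz> \<and>
      (\<forall>v w. D00 (\<mu>0 v w) + D01 (\<mu>1 v w) - \<mu>0 (D11 v) w - \<mu>0 v (D11 w) = 0) \<and>
      (\<forall>v w. D11 (\<mu>1 v w) = \<mu>1 (D11 v) w + \<mu>1 v (D11 w))"
    using blocks by blast
  also have "\<dots> \<longleftrightarrow> D ` \<zz> \<subseteq> \<zz> \<and>
      (\<forall>v w. D00 (\<mu>0 v w) + D01 (\<mu>1 v w) - \<mu>0 (D11 v) w - \<mu>0 v (D11 w) = 0) \<and>
      D11 \<in> Der J \<mu>1"
    using D11_gl unfolding Der_def by blast
  finally show ?thesis .
qed

end
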